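(* Let $A(z)=|z|^2I_d-z\otimes z$ on $\mathbb{R}^d$ and let $u$ be a probability distribution on $\mathbb{R}^d$ with finite second moment which is not concentrated on a line. Set $2E=\int|x|^2\,\mathrm{d}u(x)$ and $V=\int x\,\mathrm{d}u(x)$. Then there exists $\varepsilon>0$ such that for all $x\in\mathbb{R}^d$, $$\varepsilon\le \|A*u(x)\|_2\le 2E+|x-V|^2,$$ and $\varepsilon$ can be taken to be $\varepsilon=\operatorname{tr}(\mathrm{cov}(u))-\|\mathrm{cov}(u)\|_2$. In particular these bounds hold for any continuous probability density $u$ with finite second moment.
   Context: $\|\cdot\|_2$ denotes the matrix 2-norm (spectral norm); $(A*u)(x)=\int A(x-y)\,\mathrm{d}u(y)$ entrywise; $\mathrm{cov}(u)$ is the covariance matrix of $u$. *)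

theory Defs
  imports "HOL-Analysis.Analysis" "HOL-Probability.Probability"
begin

definition outer :: "real^'d \<Rightarrow> real^'d \<Rightarrow> real^'d^'d" where
  "outer z w = (\<chi> i j. z $ i * w $ j)"

definition Amat :: "real^'d \<Rightarrow> real^'d^'d" where
  "Amat z = (norm z)\<^sup>2 *\<^sub>R mat 1 - outer z z"

definition norm2 :: "real^'d^'d \<Rightarrow> real" where
  "norm2 M = onorm (\<lambda>v. M *v v)"

definition convA :: "(real^'d) measure \<Rightarrow> real^'d \<Rightarrow> real^'d^'d" where
  "convA u x = (\<integral>y. Amat (x - y) \<partial>u)"

definition mean :: "(real^'d) measure \<Rightarrow> real^'d" where
  "mean u = (\<integral>y. y \<partial>u)"

definition cov :: "(real^'d) measure \<Rightarrow> real^'d^'d" where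
  "cov u = (\<integral>y. outer (y - mean u) (y - mean u) \<partial>u)"

text \<open>u is concentrated on a line: some affine line (possibly degenerate to a point) has full mass.\<close>
definition concentrated_on_line :: "(real^'d) measure \<Rightarrow> bool" where
  "concentrated_on_line u \<longleftrightarrow> (\<exists>a b. measure u (range (\<lambda>t::real. a + t *\<^sub>R b)) = 1)"

end

theory Submission
  imports Defs
begin

text \<open>
For a unit vector e, the quadratic form of (A * u)(x) is the mean of
|x - y|^2 - (e . (x - y))^2 over y.  Shifting the centre from x to the mean V
(parallel axis theorem) turns it into
  (tr cov(u) - e . cov(u) e) + (|x - V|^2 - (e . (x - V))^2),
whose first bracket is at least tr cov(u) - ||cov(u)|| and whose second is
nonnegative; this gives the lower bound.  The same formula shows that
(A * u)(x) is symmetric positive semidefinite with quadratic form at most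
(tr cov(u) + |x - V|^2) |v|^2, which bounds its spectral norm, and
tr cov(u) <= 2E.  Finally ||cov(u)|| = e . cov(u) e for some unit e, and
tr cov(u) - e . cov(u) e is the mean squared distance of u from the line
V + R e, which is positive unless u is concentrated on that line.
\<close>

lemma outer_nth: "outer a b $ i = a $ i *\<^sub>R b"
  by (simp add: outer_def vec_eq_iff)

lemma norm_outer: "norm (outer a b) = norm a * norm (b::real^'n)"
proof -
  have "norm (outer a b) = L2_set (\<lambda>i. \<bar>a $ i\<bar> * norm b) UNIV"
    by (simp add: norm_vec_def[of "outer a b"] outer_nth)
  also have "\<dots> = norm a * norm b"
    by (simp add: norm_vec_def[of a] L2_set_left_distrib)
  finally show ?thesis .
qed

lemma outer_mult_vec: "outer a b *v w = (b \<bullet> w) *\<^sub>R a"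
  by (simp add: vec_eq_iff outer_def matrix_vector_mult_def inner_vec_def sum_distrib_left mult_ac)

lemma inner_Amat_mult_vec: "v \<bullet> (Amat z *v w) = (norm z)\<^sup>2 * (v \<bullet> w) - (v \<bullet> z) * (w \<bullet> z)"
  by (simp add: Amat_def matrix_vector_mult_diff_rdistrib outer_mult_vec inner_diff_right
      inner_commute[of z w] flip: scaleR_matrix_vector_assoc)

lemma norm_sq_diff_proj:
  assumes "norm e = 1"
  shows "(norm (z - (e \<bullet> z) *\<^sub>R e))\<^sup>2 = (norm z)\<^sup>2 - (e \<bullet> z) * (e \<bullet> z)"
  using assms unfolding power2_norm_eq_inner norm_eq_1
  by (simp add: inner_diff_left inner_diff_right inner_commute power2_eq_square)

lemma norm_Amat_le: "norm (Amat (z::real^'n)) \<le> (norm (mat 1 :: real^'n^'n) + 1) * (norm z)\<^sup>2"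
proof -
  have "norm (Amat z) \<le> norm ((norm z)\<^sup>2 *\<^sub>R (mat 1 :: real^'n^'n)) + norm (outer z z)"
    unfolding Amat_def by (rule norm_triangle_ineq4)
  then show ?thesis by (simp add: norm_outer power2_eq_square algebra_simps)
qed

lemma trace_eq_sum_axis: "trace (M::real^'n^'n) = (\<Sum>i\<in>UNIV. axis i 1 \<bullet> (M *v axis i 1))"
  unfolding trace_def inner_axis'
  by (simp add: matrix_vector_mult_def axis_def if_distrib[where f="\<lambda>x. _ * x"] cong: if_cong)

lemma sum_axis_inner_sq: "(\<Sum>i\<in>UNIV. (axis i 1 \<bullet> (x::real^'n)) * (axis i 1 \<bullet> x)) = (norm x)\<^sup>2"
  unfolding inner_axis' unfolding power2_norm_eq_inner inner_vec_def by (simp add: power2_eq_square)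

definition symmetric_psd :: "real^'n^'n \<Rightarrow> bool" where
  "symmetric_psd M \<longleftrightarrow>
    (\<forall>v w. v \<bullet> (M *v w) = w \<bullet> (M *v v)) \<and> (\<forall>v. 0 \<le> v \<bullet> (M *v v))"

lemma symmetric_psdI:
  assumes "\<And>v w. v \<bullet> (M *v w) = w \<bullet> (M *v v)" and "\<And>v. 0 \<le> v \<bullet> (M *v v)"
  shows "symmetric_psd M"
  using assms by (simp add: symmetric_psd_def)

lemma Cauchy_Schwarz_symmetric_psd:
  assumes "symmetric_psd M"
  shows "(a \<bullet> (M *v b))\<^sup>2 \<le> (a \<bullet> (M *v a)) * (b \<bullet> (M *v b))"
proof -
  define p q r where "p = a \<bullet> (M *v a)" and "q = b \<bullet> (M *v b)" and "r = a \<bullet> (M *v b)"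
  have "b \<bullet> (M *v a) = r"
    using assms by (simp add: symmetric_psd_def r_def)
  then have "(a + t *\<^sub>R b) \<bullet> (M *v (a + t *\<^sub>R b)) = p + 2 * t * r + t\<^sup>2 * q" for t
    by (simp add: p_def q_def r_def power2_eq_square algebra_simps)
  then have nonneg: "0 \<le> p + 2 * t * r + t\<^sup>2 * q" for t
    using assms by (metis symmetric_psd_def)
  show ?thesis
  proof (cases "q = 0")
    case True
    have "r = 0"
    proof (rule ccontr)
      assume "r \<noteq> 0"
      then have "p + 2 * (- (p + 1) / (2 * r)) * r + (- (p + 1) / (2 * r))\<^sup>2 * q = -1"
        using True by (simp add: field_simps)
      with nonneg[of "- (p + 1) / (2 * r)"] show False by linarith
    qed
    then show ?thesis by (simp add: p_def q_def r_def True[unfolded q_def])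
  next
    case False
    then have "q > 0"
      using assms by (simp add: symmetric_psd_def q_def order_less_le)
    have "0 \<le> p + 2 * (- r / q) * r + (- r / q)\<^sup>2 * q" by (rule nonneg)
    also have "\<dots> = p - r\<^sup>2 / q" using \<open>q > 0\<close> by (simp add: field_simps power2_eq_square)
    finally show ?thesis using \<open>q > 0\<close> by (simp add: p_def q_def r_def field_simps)
  qed
qed

lemma quadratic_form_le_norm2:
  assumes "norm e = 1"
  shows "e \<bullet> (M *v e) \<le> norm2 M"
proof -
  have "e \<bullet> (M *v e) \<le> norm (M *v e)"
    using norm_cauchy_schwarz[of e "M *v e"] assms by simp
  also have "\<dots> \<le> norm2 M"
    using onorm[of "\<lambda>v. M *v v" e] assms by (simp add: norm2_def)
  finally show ?thesis .
qed

lemma norm2_le_symmetric_psd: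
  fixes M :: "real^'n^'n"
  assumes psd: "symmetric_psd M" and le: "\<And>v. v \<bullet> (M *v v) \<le> l * (norm v)\<^sup>2"
  shows "norm2 M \<le> l"
proof -
  have form_nonneg: "0 \<le> v \<bullet> (M *v v)" for v
    using psd by (simp add: symmetric_psd_def)
  obtain e :: "real^'n" where "norm e = 1"
    using vector_choose_size zero_le_one by blast
  then have "0 \<le> l"
    using form_nonneg[of e] le[of e] by simp
  show ?thesis
    unfolding norm2_def
  proof (rule onorm_le)
    fix v
    let ?w = "M *v v"
    have "((norm ?w)\<^sup>2)\<^sup>2 = (?w \<bullet> (M *v v))\<^sup>2"
      by (simp add: power2_norm_eq_inner)
    also have "\<dots> \<le> (?w \<bullet> (M *v ?w)) * (v \<bullet> (M *v v))"
      by (rule Cauchy_Schwarz_symmetric_psd[OF psd])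
    also have "\<dots> \<le> (l * (norm ?w)\<^sup>2) * (l * (norm v)\<^sup>2)"
      by (rule mult_mono[OF le le _ form_nonneg]) (simp add: \<open>0 \<le> l\<close>)
    also have "\<dots> = (norm ?w * (l * norm v))\<^sup>2"
      by (simp add: power2_eq_square)
    finally have "(norm ?w)\<^sup>2 \<le> norm ?w * (l * norm v)"
      by (rule power2_le_imp_le) (simp add: \<open>0 \<le> l\<close>)
    then show "norm ?w \<le> l * norm v"
      by (cases "?w = 0") (simp_all add: \<open>0 \<le> l\<close> power2_eq_square)
  qed
qed

lemma symmetric_psd_norm2_attained:
  fixes M :: "real^'n^'n"
  assumes "symmetric_psd M"
  obtains e where "norm e = 1" and "norm2 M = e \<bullet> (M *v e)"
proof -
  have "continuous_on (sphere 0 1) (\<lambda>v. v \<bullet> (M *v v))"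
    by (intro continuous_intros linear_continuous_on matrix_vector_mul_bounded_linear)
  moreover have "sphere (0::real^'n) 1 \<noteq> {}"
    by simp
  ultimately obtain e where e: "e \<in> sphere 0 1"
    and max: "\<And>v. v \<in> sphere 0 1 \<Longrightarrow> v \<bullet> (M *v v) \<le> e \<bullet> (M *v e)"
    using continuous_attains_sup[OF compact_sphere] by blast
  have "v \<bullet> (M *v v) \<le> (e \<bullet> (M *v e)) * (norm v)\<^sup>2" for v
  proof (cases "v = 0")
    case False
    have "(v /\<^sub>R norm v) \<bullet> (M *v (v /\<^sub>R norm v)) = (v \<bullet> (M *v v)) / (norm v)\<^sup>2"
      by (simp add: matrix_vector_mult_scaleR power2_eq_square divide_inverse)
    moreover have "(v /\<^sub>R norm v) \<bullet> (M *v (v /\<^sub>R norm v)) \<le> e \<bullet> (M *v e)"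
      using False by (intro max) simp
    ultimately show ?thesis
      using False by (simp add: pos_divide_le_eq)
  qed simp
  then have "norm2 M \<le> e \<bullet> (M *v e)"
    by (rule norm2_le_symmetric_psd[OF assms])
  moreover have "e \<bullet> (M *v e) \<le> norm2 M"
    using e by (intro quadratic_form_le_norm2) simp
  ultimately show ?thesis
    using that e by simp
qed

lemma inner_integral_mult_vec:
  fixes F :: "'a \<Rightarrow> real^'n^'m"
  assumes "integrable M F"
  shows "v \<bullet> ((\<integral>y. F y \<partial>M) *v w) = (\<integral>y. v \<bullet> (F y *v w) \<partial>M)"
proof -
  have "linear (\<lambda>A::real^'n^'m. v \<bullet> (A *v w))"
    by (rule linearI) (simp_all add: matrix_vector_mult_add_rdistrib inner_add_right
        matrix_vector_mult_def inner_vec_def sum_distrib_left sum_distrib_right mult_ac distrib_left sum.distrib)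
  then have "bounded_linear (\<lambda>A::real^'n^'m. v \<bullet> (A *v w))"
    by (simp add: linear_conv_bounded_linear)
  from integral_bounded_linear[OF this assms] show ?thesis
    by simp
qed

locale finite_second_moment = prob_space u for u :: "(real^'d) measure" +
  assumes sets_eq_borel: "sets u = sets borel"
    and integrable_norm_sq: "integrable u (\<lambda>y. (norm y)\<^sup>2)"
begin

lemma integrable_quadratic_growth:
  fixes g :: "real^'d \<Rightarrow> 'b::{banach, second_countable_topology}"
  assumes "continuous_on UNIV g" and growth: "\<And>y. norm (g y) \<le> a + b * (norm (y - p))\<^sup>2"
  shows "integrable u g"
proof (rule Bochner_Integration.integrable_bound)
  show "integrable u (\<lambda>y. \<bar>a\<bar> + \<bar>b\<bar> * (2 * (norm p)\<^sup>2 + 2 * (norm y)\<^sup>2))"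
    using integrable_norm_sq by simp
  show "g \<in> borel_measurable u"
    using borel_measurable_continuous_onI[OF assms(1)]
    by (simp add: measurable_cong_sets[OF sets_eq_borel refl])
  have "norm (g y) \<le> \<bar>a\<bar> + \<bar>b\<bar> * (2 * (norm p)\<^sup>2 + 2 * (norm y)\<^sup>2)" for y
  proof -
    have "(norm (y - p))\<^sup>2 \<le> (norm y + norm p)\<^sup>2"
      by (intro power_mono norm_triangle_ineq4) simp
    also have "\<dots> \<le> 2 * (norm p)\<^sup>2 + 2 * (norm y)\<^sup>2"
      using zero_le_power2[of "norm y - norm p"] by (simp add: power2_eq_square algebra_simps)
    finally have "\<bar>b\<bar> * (norm (y - p))\<^sup>2 \<le> \<bar>b\<bar> * (2 * (norm p)\<^sup>2 + 2 * (norm y)\<^sup>2)"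
      by (rule mult_left_mono) simp
    moreover have "b * (norm (y - p))\<^sup>2 \<le> \<bar>b\<bar> * (norm (y - p))\<^sup>2"
      by (rule mult_right_mono) simp_all
    ultimately show ?thesis
      using growth[of y] by linarith
  qed
  then show "AE y in u. norm (g y) \<le> norm (\<bar>a\<bar> + \<bar>b\<bar> * (2 * (norm p)\<^sup>2 + 2 * (norm y)\<^sup>2))"
    by (auto intro: order_trans[OF _ abs_ge_self])
qed

lemma integrable_id: "integrable u (\<lambda>y. y)"
proof (rule integrable_quadratic_growth[where a = 1 and b = 1 and p = 0])
  show "norm y \<le> 1 + 1 * (norm (y - 0))\<^sup>2" for y :: "real^'d"
    using zero_le_power2[of "norm y - 1/2"] by (simp add: power2_eq_square algebra_simps)
qed (rule continuous_on_id)

lemma integrable_inner: "integrable u (\<lambda>y. a \<bullet> (y - p))"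
  using integrable_id by (simp add: inner_diff_right)

lemma integrable_norm_diff_sq: "integrable u (\<lambda>y. (norm (y - p))\<^sup>2)"
  by (rule integrable_quadratic_growth[where a = 0 and b = 1 and p = p])
    (simp_all add: continuous_on_power continuous_on_norm continuous_on_diff)

lemma integrable_inner_mult: "integrable u (\<lambda>y. (a \<bullet> (y - p)) * (b \<bullet> (y - p)))"
proof (rule integrable_quadratic_growth[where a = 0 and b = "norm a * norm b" and p = p])
  show "continuous_on UNIV (\<lambda>y. (a \<bullet> (y - p)) * (b \<bullet> (y - p)))"
    by (intro continuous_intros)
  show "norm ((a \<bullet> (y - p)) * (b \<bullet> (y - p))) \<le> 0 + norm a * norm b * (norm (y - p))\<^sup>2" for y
  proof -
    have "\<bar>a \<bullet> (y - p)\<bar> * \<bar>b \<bullet> (y - p)\<bar> \<le> (norm a * norm (y - p)) * (norm b * norm (y - p))"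
      by (intro mult_mono Cauchy_Schwarz_ineq2) simp_all
    then show ?thesis
      by (simp add: abs_mult power2_eq_square mult_ac)
  qed
qed

lemma integrable_outer: "integrable u (\<lambda>y. outer (y - p) (y - p))"
proof (rule integrable_quadratic_growth[where a = 0 and b = 1 and p = p])
  show "continuous_on UNIV (\<lambda>y. outer (y - p) (y - p))"
    unfolding outer_def by (intro continuous_intros)
qed (simp add: norm_outer power2_eq_square)

lemma integrable_Amat: "integrable u (\<lambda>y. Amat (x - y))"
proof (rule integrable_quadratic_growth[where a = 0 and b = "norm (mat 1 :: real^'d^'d) + 1" and p = x])
  show "continuous_on UNIV (\<lambda>y. Amat (x - y))"
    unfolding Amat_def outer_def by (intro continuous_intros)
  show "norm (Amat (x - y)) \<le> 0 + (norm (mat 1 :: real^'d^'d) + 1) * (norm (y - x))\<^sup>2" for y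
    using norm_Amat_le[of "x - y"] by (simp add: norm_minus_commute)
qed


lemma integral_inner_diff_mean: "(\<integral>y. a \<bullet> (y - mean u) \<partial>u) = 0"
proof -
  have "(\<integral>y. a \<bullet> (y - mean u) \<partial>u) = (\<integral>y. a \<bullet> y \<partial>u) - (\<integral>y. a \<bullet> mean u \<partial>u)"
    unfolding inner_diff_right using integrable_id by (intro Bochner_Integration.integral_diff) auto
  then show ?thesis
    using integrable_id by (simp add: mean_def prob_space)
qed

lemma inner_cov_mult_vec:
  "v \<bullet> (cov u *v w) = (\<integral>y. (v \<bullet> (y - mean u)) * (w \<bullet> (y - mean u)) \<partial>u)"
  unfolding cov_def
  by (simp add: inner_integral_mult_vec[OF integrable_outer] outer_mult_vec inner_commute[of _ w] mult.commute)

lemma cov_symmetric_psd: "symmetric_psd (cov u)"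
  by (rule symmetric_psdI) (simp_all add: inner_cov_mult_vec mult.commute integral_nonneg_AE)

lemma integral_inner_mult_shift:
  "(\<integral>y. (a \<bullet> (y - p)) * (b \<bullet> (y - p)) \<partial>u) =
    a \<bullet> (cov u *v b) + (a \<bullet> (mean u - p)) * (b \<bullet> (mean u - p))"
proof -
  define c where "c = mean u - p"
  have "(a \<bullet> (y - p)) * (b \<bullet> (y - p)) =
      (a \<bullet> (y - mean u)) * (b \<bullet> (y - mean u))
      + ((b \<bullet> c) * (a \<bullet> (y - mean u)) + (a \<bullet> c) * (b \<bullet> (y - mean u)))
      + (a \<bullet> c) * (b \<bullet> c)" for y
    by (simp add: c_def algebra_simps)
  then have "(\<integral>y. (a \<bullet> (y - p)) * (b \<bullet> (y - p)) \<partial>u) =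
      (\<integral>y. (a \<bullet> (y - mean u)) * (b \<bullet> (y - mean u)) \<partial>u)
      + ((b \<bullet> c) * (\<integral>y. a \<bullet> (y - mean u) \<partial>u) + (a \<bullet> c) * (\<integral>y. b \<bullet> (y - mean u) \<partial>u))
      + (a \<bullet> c) * (b \<bullet> c)"
    using integrable_inner_mult integrable_inner by (simp add: prob_space)
  then show ?thesis
    by (simp add: integral_inner_diff_mean inner_cov_mult_vec c_def)
qed

lemma integral_norm_diff_sq: "(\<integral>y. (norm (y - p))\<^sup>2 \<partial>u) = trace (cov u) + (norm (mean u - p))\<^sup>2"
proof -
  have "(\<integral>y. (norm (y - p))\<^sup>2 \<partial>u) =
      (\<integral>y. (\<Sum>i\<in>UNIV. (axis i 1 \<bullet> (y - p)) * (axis i 1 \<bullet> (y - p))) \<partial>u)"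
    by (simp only: sum_axis_inner_sq)
  also have "\<dots> = (\<Sum>i\<in>UNIV. \<integral>y. (axis i 1 \<bullet> (y - p)) * (axis i 1 \<bullet> (y - p)) \<partial>u)"
    by (rule Bochner_Integration.integral_sum) (rule integrable_inner_mult)
  also have "\<dots> = trace (cov u) + (norm (mean u - p))\<^sup>2"
    by (simp add: integral_inner_mult_shift sum.distrib trace_eq_sum_axis sum_axis_inner_sq)
  finally show ?thesis .
qed

lemma inner_convA_mult_vec:
  "v \<bullet> (convA u x *v w) =
    (\<integral>y. (norm (x - y))\<^sup>2 * (v \<bullet> w) - (v \<bullet> (x - y)) * (w \<bullet> (x - y)) \<partial>u)"
  unfolding convA_def by (simp add: inner_integral_mult_vec[OF integrable_Amat] inner_Amat_mult_vec)

lemma convA_symmetric_psd: "symmetric_psd (convA u x)"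
proof (rule symmetric_psdI)
  show "v \<bullet> (convA u x *v w) = w \<bullet> (convA u x *v v)" for v w
    by (simp add: inner_convA_mult_vec inner_commute mult.commute)
  show "0 \<le> v \<bullet> (convA u x *v v)" for v
    unfolding inner_convA_mult_vec
  proof (intro integral_nonneg_AE AE_I2)
    show "0 \<le> (norm (x - y))\<^sup>2 * (v \<bullet> v) - (v \<bullet> (x - y)) * (v \<bullet> (x - y))" for y
      using Cauchy_Schwarz_ineq[of v "x - y"] unfolding power2_norm_eq_inner
      by (simp add: power2_eq_square mult.commute)
  qed
qed

lemma quadratic_form_convA:
  "v \<bullet> (convA u x *v v) =
    (norm v)\<^sup>2 * (trace (cov u) + (norm (x - mean u))\<^sup>2) - (v \<bullet> (cov u *v v) + (v \<bullet> (x - mean u))\<^sup>2)"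
proof -
  have "(norm (x - y))\<^sup>2 * (v \<bullet> v) - (v \<bullet> (x - y)) * (v \<bullet> (x - y)) =
      (norm v)\<^sup>2 * (norm (y - x))\<^sup>2 - (v \<bullet> (y - x)) * (v \<bullet> (y - x))" for y
    by (simp add: norm_minus_commute inner_diff_right power2_norm_eq_inner algebra_simps)
  then have "v \<bullet> (convA u x *v v) =
      (\<integral>y. (norm v)\<^sup>2 * (norm (y - x))\<^sup>2 - (v \<bullet> (y - x)) * (v \<bullet> (y - x)) \<partial>u)"
    by (simp add: inner_convA_mult_vec)
  also have "\<dots> = (norm v)\<^sup>2 * (\<integral>y. (norm (y - x))\<^sup>2 \<partial>u)
      - (\<integral>y. (v \<bullet> (y - x)) * (v \<bullet> (y - x)) \<partial>u)"
    using integrable_norm_diff_sq integrable_inner_mult by simp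
  also have "\<dots> = (norm v)\<^sup>2 * (trace (cov u) + (norm (mean u - x))\<^sup>2)
      - (v \<bullet> (cov u *v v) + (v \<bullet> (mean u - x)) * (v \<bullet> (mean u - x)))"
    by (simp only: integral_norm_diff_sq integral_inner_mult_shift)
  also have "\<dots> = (norm v)\<^sup>2 * (trace (cov u) + (norm (x - mean u))\<^sup>2)
      - (v \<bullet> (cov u *v v) + (v \<bullet> (x - mean u))\<^sup>2)"
    by (simp add: norm_minus_commute inner_diff_right power2_eq_square algebra_simps)
  finally show ?thesis .
qed

lemma norm2_convA_le: "norm2 (convA u x) \<le> trace (cov u) + (norm (x - mean u))\<^sup>2"
proof (rule norm2_le_symmetric_psd[OF convA_symmetric_psd])
  show "v \<bullet> (convA u x *v v) \<le> (trace (cov u) + (norm (x - mean u))\<^sup>2) * (norm v)\<^sup>2" for v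
  proof -
    have "0 \<le> v \<bullet> (cov u *v v) + (v \<bullet> (x - mean u))\<^sup>2"
      using cov_symmetric_psd by (simp add: symmetric_psd_def)
    then show ?thesis
      by (simp add: quadratic_form_convA mult.commute)
  qed
qed

lemma trace_cov_le_second_moment: "trace (cov u) \<le> (\<integral>y. (norm y)\<^sup>2 \<partial>u)"
  using integral_norm_diff_sq[of 0] by simp

lemma norm2_convA_ge: "trace (cov u) - norm2 (cov u) \<le> norm2 (convA u x)"
proof -
  obtain e :: "real^'d" where e: "norm e = 1"
    using vector_choose_size zero_le_one by blast
  have "(e \<bullet> (x - mean u))\<^sup>2 \<le> (norm (x - mean u))\<^sup>2"
    using power_mono[OF Cauchy_Schwarz_ineq2[of e "x - mean u"] abs_ge_zero, of 2] e by simp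
  moreover have "e \<bullet> (cov u *v e) \<le> norm2 (cov u)"
    using e by (rule quadratic_form_le_norm2)
  moreover have "e \<bullet> (convA u x *v e) \<le> norm2 (convA u x)"
    using e by (rule quadratic_form_le_norm2)
  ultimately show ?thesis
    using quadratic_form_convA[of e] e by simp
qed

lemma trace_cov_minus_quadratic_form:
  assumes "norm e = 1"
  shows "trace (cov u) - e \<bullet> (cov u *v e) =
    (\<integral>y. (norm (y - mean u - (e \<bullet> (y - mean u)) *\<^sub>R e))\<^sup>2 \<partial>u)"
proof -
  have "(\<integral>y. (norm (y - mean u - (e \<bullet> (y - mean u)) *\<^sub>R e))\<^sup>2 \<partial>u) =
      (\<integral>y. (norm (y - mean u))\<^sup>2 - (e \<bullet> (y - mean u)) * (e \<bullet> (y - mean u)) \<partial>u)"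
    by (simp only: norm_sq_diff_proj[OF assms])
  also have "\<dots> = trace (cov u) - e \<bullet> (cov u *v e)"
    using integrable_norm_diff_sq integrable_inner_mult
    by (simp add: integral_norm_diff_sq integral_inner_mult_shift)
  finally show ?thesis ..
qed

lemma concentrated_on_lineI:
  assumes "AE y in u. y \<in> range (\<lambda>t::real. a + t *\<^sub>R b)"
  shows "concentrated_on_line u"
proof -
  have "range (\<lambda>t::real. a + t *\<^sub>R b) = (+) a ` span {b}"
    by (auto simp: span_singleton image_image)
  then have "range (\<lambda>t::real. a + t *\<^sub>R b) \<in> sets u"
    by (simp add: sets_eq_borel borel_closed closed_translation)
  with assms have "measure u (range (\<lambda>t::real. a + t *\<^sub>R b)) = 1"
    by (simp add: prob_eq_1)
  then show ?thesis
    unfolding concentrated_on_line_def by blast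
qed

lemma quadratic_form_cov_less_trace:
  assumes "\<not> concentrated_on_line u" and e: "norm e = 1"
  shows "e \<bullet> (cov u *v e) < trace (cov u)"
proof -
  define h where "h y = (norm (y - mean u - (e \<bullet> (y - mean u)) *\<^sub>R e))\<^sup>2" for y
  have "integrable u h"
    unfolding h_def norm_sq_diff_proj[OF e]
    by (intro Bochner_Integration.integrable_diff integrable_norm_diff_sq integrable_inner_mult)
  have h_nonneg: "AE y in u. 0 \<le> h y"
    by (simp add: h_def)
  have "(\<integral>y. h y \<partial>u) \<noteq> 0"
  proof
    assume "(\<integral>y. h y \<partial>u) = 0"
    then have "AE y in u. h y = 0"
      using integral_nonneg_eq_0_iff_AE[OF \<open>integrable u h\<close> h_nonneg] by simp
    then have "AE y in u. y \<in> range (\<lambda>t::real. mean u + t *\<^sub>R e)"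
    proof (rule AE_mp, intro AE_I2 impI)
      fix y assume "h y = 0"
      then have "y = mean u + (e \<bullet> (y - mean u)) *\<^sub>R e"
        by (simp add: h_def algebra_simps)
      then show "y \<in> range (\<lambda>t::real. mean u + t *\<^sub>R e)"
        by blast
    qed
    with assms(1) show False
      using concentrated_on_lineI by blast
  qed
  with integral_nonneg_AE[OF h_nonneg] have "0 < (\<integral>y. h y \<partial>u)"
    by simp
  then show ?thesis
    using trace_cov_minus_quadratic_form[OF e] unfolding h_def by linarith
qed

lemma norm2_cov_less_trace:
  assumes "\<not> concentrated_on_line u"
  shows "norm2 (cov u) < trace (cov u)"
proof -
  obtain e where "norm e = 1" and "norm2 (cov u) = e \<bullet> (cov u *v e)"
    using symmetric_psd_norm2_attained[OF cov_symmetric_psd] by blast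
  with quadratic_form_cov_less_trace[OF assms] show ?thesis
    by simp
qed

end

theorem lemma2p3:
  fixes u :: "(real^'d) measure"
  assumes "prob_space u"
    and "sets u = sets borel"
    and "integrable u (\<lambda>x. (norm x)\<^sup>2)"
    and "\<not> concentrated_on_line u"
  shows "0 < trace (cov u) - norm2 (cov u) \<and>
         (\<forall>x. trace (cov u) - norm2 (cov u) \<le> norm2 (convA u x) \<and>
              norm2 (convA u x) \<le> (\<integral>y. (norm y)\<^sup>2 \<partial>u) + (norm (x - mean u))\<^sup>2)"
proof -
  interpret finite_second_moment u
    using assms(1-3) by (simp add: finite_second_moment_def finite_second_moment_axioms_def)
  have "norm2 (convA u x) \<le> (\<integral>y. (norm y)\<^sup>2 \<partial>u) + (norm (x - mean u))\<^sup>2" for x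
    using norm2_convA_le[of x] trace_cov_le_second_moment by linarith
  then show ?thesis
    using norm2_cov_less_trace[OF assms(4)] norm2_convA_ge by simp
qed

end
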